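(* Let $p,N\in\mathbb{N}$, $x_0<\cdots<x_N$, data $y_{n,2k}\in\mathbb{R}$ ($n=0,\dots,N$, $k=0,\dots,p$), and $\alpha\in\Theta_{2p}$. Let $\ell_\alpha$ be the Lidstone FIF and $\phi$ the classical Lidstone interpolation function for this data. Then $$\|\ell_\alpha-\phi\|_\infty\le\frac{|\alpha|_\infty}{1-|\alpha|_\infty}\big(\|\phi\|_\infty+M_{0,2p}\big),\qquad M_{0,2p}=\frac{2\rho\pi}{3}\sum_{l=0}^{p}\Big(\frac{x_N-x_0}{\pi}\Big)^{2l}.$$
   Context: Lidstone polynomials $\Lambda_l$: $\Lambda_0(x)=x$, $\Lambda_l''=\Lambda_{l-1}$, $\Lambda_l(0)=\Lambda_l(1)=0$ for $l\ge1$. $a_n=\frac{x_n-x_{n-1}}{x_N-x_0}$, $L_n(x)=a_nx+\frac{x_Nx_{n-1}-x_0x_n}{x_N-x_0}$. $\Theta_{2p}=\{\alpha\in\mathbb{R}^N:|\alpha_n|<a_n^{2p}\ \forall n\}$. For $\alpha\in\Theta_{2p}$, the Lidstone FIF $\ell_\alpha$ is the unique $C^{2p}[x_0,x_N]$ function satisfying $\ell_\alpha(L_n(x))=\alpha_n\ell_\alpha(x)+q_n(x)$ for $x\in[x_0,x_N]$, $n=1,\dots,N$, where $q_n(x)=\sum_{l=0}^p[(a_n^{2l}y_{n-1,2l}-\alpha_ny_{0,2l})\Lambda_l(\frac{x_N-x}{x_N-x_0})+(a_n^{2l}y_{n,2l}-\alpha_ny_{N,2l})\Lambda_l(\frac{x-x_0}{x_N-x_0})](x_N-x_0)^{2l}$;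 it satisfies $\ell_\alpha^{(2k)}(x_n)=y_{n,2k}$. The classical Lidstone interpolation function $\phi$ is defined on each $[x_{n-1},x_n]$, with $h_n=x_n-x_{n-1}$, by $\phi(x)=\sum_{l=0}^p\big[y_{n-1,2l}\Lambda_l(\frac{x_n-x}{h_n})+y_{n,2l}\Lambda_l(\frac{x-x_{n-1}}{h_n})\big]h_n^{2l}$ (it equals $\ell_0$). Notation: $|\alpha|_\infty=\max_n|\alpha_n|$, $\|f\|_\infty=\sup_{[x_0,x_N]}|f|$, $\rho=\max_{0\le k\le p}\max\{|y_{0,2k}|,|y_{N,2k}|\}$. *)

theory Defs
  imports "HOL-Analysis.Analysis"
begin

fun Lidstone :: "nat \<Rightarrow> real \<Rightarrow> real" where
  "Lidstone 0 = (\<lambda>x. x)"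
| "Lidstone (Suc l) = (THE f. (\<exists>f'. \<forall>t. (f has_real_derivative f' t) (at t) \<and>
        (f' has_real_derivative Lidstone l t) (at t)) \<and> f 0 = 0 \<and> f 1 = 0)"

definition C_k_on :: "nat \<Rightarrow> real \<Rightarrow> real \<Rightarrow> (real \<Rightarrow> real) \<Rightarrow> bool" where
  "C_k_on m a b f \<longleftrightarrow> (\<exists>D :: nat \<Rightarrow> real \<Rightarrow> real. (\<forall>t\<in>{a..b}. D 0 t = f t) \<and>
     (\<forall>k<m. \<forall>t\<in>{a..b}. (D k has_real_derivative D (Suc k) t) (at t within {a..b})) \<and>
     continuous_on {a..b} (D m))"

definition a_coef :: "(nat \<Rightarrow> real) \<Rightarrow> nat \<Rightarrow> nat \<Rightarrow> real" where
  "a_coef x N n = (x n - x (n - 1)) / (x N - x 0)"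

definition L_map :: "(nat \<Rightarrow> real) \<Rightarrow> nat \<Rightarrow> nat \<Rightarrow> real \<Rightarrow> real" where
  "L_map x N n t = a_coef x N n * t + (x N * x (n - 1) - x 0 * x n) / (x N - x 0)"

definition Theta :: "(nat \<Rightarrow> real) \<Rightarrow> nat \<Rightarrow> nat \<Rightarrow> (nat \<Rightarrow> real) set" where
  "Theta x N p = {\<alpha>. \<forall>n\<in>{1..N}. \<bar>\<alpha> n\<bar> < a_coef x N n ^ (2 * p)}"

text \<open>q_n; data y n (2k) = y_{n,2k}.\<close>
definition q_fun :: "(nat \<Rightarrow> real) \<Rightarrow> (nat \<Rightarrow> nat \<Rightarrow> real) \<Rightarrow> nat \<Rightarrow> nat \<Rightarrow>
    (nat \<Rightarrow> real) \<Rightarrow> nat \<Rightarrow> real \<Rightarrow> real" where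
  "q_fun x y N p \<alpha> n t = (\<Sum>l=0..p.
     ((a_coef x N n ^ (2*l) * y (n - 1) (2*l) - \<alpha> n * y 0 (2*l)) *
        Lidstone l ((x N - t) / (x N - x 0))
    + (a_coef x N n ^ (2*l) * y n (2*l) - \<alpha> n * y N (2*l)) *
        Lidstone l ((t - x 0) / (x N - x 0))) * (x N - x 0) ^ (2*l))"

definition is_Lidstone_FIF :: "(nat \<Rightarrow> real) \<Rightarrow> (nat \<Rightarrow> nat \<Rightarrow> real) \<Rightarrow> nat \<Rightarrow> nat \<Rightarrow>
    (nat \<Rightarrow> real) \<Rightarrow> (real \<Rightarrow> real) \<Rightarrow> bool" where
  "is_Lidstone_FIF x y N p \<alpha> f \<longleftrightarrow> C_k_on (2*p) (x 0) (x N) f \<and>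
     (\<forall>n\<in>{1..N}. \<forall>t\<in>{x 0..x N}. f (L_map x N n t) = \<alpha> n * f t + q_fun x y N p \<alpha> n t)"

definition Lidstone_piece :: "(nat \<Rightarrow> real) \<Rightarrow> (nat \<Rightarrow> nat \<Rightarrow> real) \<Rightarrow> nat \<Rightarrow> nat \<Rightarrow> real \<Rightarrow> real" where
  "Lidstone_piece x y p n t = (let h = x n - x (n - 1) in
     (\<Sum>l=0..p. (y (n - 1) (2*l) * Lidstone l ((x n - t) / h)
                 + y n (2*l) * Lidstone l ((t - x (n - 1)) / h)) * h ^ (2*l)))"

text \<open>On [x_0,x_N], use the piece of the first interval [x_{n-1},x_n] containing t
 (pieces agree at the nodes).\<close>
definition Lidstone_interp :: "(nat \<Rightarrow> real) \<Rightarrow> (nat \<Rightarrow> nat \<Rightarrow> real) \<Rightarrow> nat \<Rightarrow> real \<Rightarrow> real" where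
  "Lidstone_interp x y p t = Lidstone_piece x y p (LEAST n. 1 \<le> n \<and> t \<le> x n) t"

definition sup_norm :: "real \<Rightarrow> real \<Rightarrow> (real \<Rightarrow> real) \<Rightarrow> real" where
  "sup_norm a b f = (SUP t\<in>{a..b}. \<bar>f t\<bar>)"

definition alpha_norm :: "nat \<Rightarrow> (nat \<Rightarrow> real) \<Rightarrow> real" where
  "alpha_norm N \<alpha> = Max ((\<lambda>n. \<bar>\<alpha> n\<bar>) ` {1..N})"

definition rho :: "(nat \<Rightarrow> nat \<Rightarrow> real) \<Rightarrow> nat \<Rightarrow> nat \<Rightarrow> real" where
  "rho y N p = Max ((\<lambda>k. max \<bar>y 0 (2*k)\<bar> \<bar>y N (2*k)\<bar>) ` {0..p})"

definition M0 :: "(nat \<Rightarrow> real) \<Rightarrow> (nat \<Rightarrow> nat \<Rightarrow> real) \<Rightarrow> nat \<Rightarrow> nat \<Rightarrow> real" where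
  "M0 x y N p = 2 * rho y N p * pi / 3 * (\<Sum>l=0..p. ((x N - x 0) / pi) ^ (2*l))"

end

theory Submission
  imports Defs "HOL-Computational_Algebra.Polynomial"
begin

(* 1. The Lidstone polynomials are well defined (each boundary value problem
      Lambda'' = Lambda_l, Lambda(0) = Lambda(1) = 0 has a unique, polynomial solution), and
      |Lambda_(l+1)(t)| <= sin(pi t) / (3 pi^(2l+1)) on [0,1], by induction via a
      maximum principle for convex functions; hence the pairs
      |Lambda_l(u)| + |Lambda_l(1-u)| are bounded by 2 pi / (3 pi^(2l)).
   2. Pulling the classical piece on [x_(n-1), x_n] back along L_n gives
      phi o L_n = q_n + alpha_n B, where B is the Lidstone interpolant of the endpoint
      data on [x_0, x_N]; by step 1, |B| <= M_(0,2p).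
   3. Subtracting this from the functional equation yields the self-similarity
      l_alpha(L_n s) - phi(L_n s) = alpha_n (l_alpha(s) - B(s)), so the error g satisfies
      |g| <= |alpha|_inf (||g|| + ||phi|| + M_(0,2p)) pointwise; since |alpha|_inf < 1,
      solving this fixed-point inequality for ||g|| gives the theorem. *)

lemma poly_antiderivative_exists: "\<exists>q::real poly. pderiv q = p"
proof -
  let ?q = "\<Sum>i\<le>degree p. monom (coeff p i / real (Suc i)) (Suc i)"
  have "pderiv ?q = (\<Sum>i\<le>degree p. monom (coeff p i) i)"
    using higher_pderiv_sum[of 1 "\<lambda>i. monom (coeff p i / real (Suc i)) (Suc i)" "{..degree p}"]
    by (simp add: pderiv_monom)
  also have "\<dots> = p" by (rule poly_as_sum_of_monoms)
  finally show ?thesis by blast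
qed

definition Lidstone_step :: "nat \<Rightarrow> (real \<Rightarrow> real) \<Rightarrow> (real \<Rightarrow> real) \<Rightarrow> bool" where
  "Lidstone_step l f f' \<longleftrightarrow> (\<forall>t. (f has_real_derivative f' t) (at t) \<and>
        (f' has_real_derivative Lidstone l t) (at t)) \<and> f 0 = 0 \<and> f 1 = 0"

text \<open>Uniqueness: two solutions differ by an affine function vanishing at 0 and 1.\<close>
lemma Lidstone_step_unique:
  assumes "Lidstone_step l f f'" "Lidstone_step l g g'" shows "f = g"
proof -
  have "((\<lambda>t. f' t - g' t) has_real_derivative 0) (at t)" for t
    using assms unfolding Lidstone_step_def by (metis (no_types) DERIV_diff diff_self)
  then obtain c where c: "\<And>t. f' t - g' t = c"
    using DERIV_isconst_all by blast
  have "((\<lambda>t. f t - g t - c * t) has_real_derivative f' t - g' t - c) (at t)" for t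
    using assms unfolding Lidstone_step_def by (auto intro!: derivative_eq_intros)
  then have "((\<lambda>t. f t - g t - c * t) has_real_derivative 0) (at t)" for t
    using c by simp
  then have affine: "\<And>t. f t - g t - c * t = f 0 - g 0 - c * 0"
    using DERIV_isconst_all by blast
  have "c = 0" using affine[of 1] assms unfolding Lidstone_step_def by simp
  then show ?thesis using affine assms unfolding Lidstone_step_def by (auto simp: fun_eq_iff)
qed

lemma Lidstone_Suc_eqI:
  assumes "Lidstone_step l g g'" shows "Lidstone (Suc l) = g"
proof -
  have "Lidstone (Suc l) = (THE f. \<exists>f'. Lidstone_step l f f')"
    by (simp add: Lidstone_step_def)
  also have "\<dots> = g"
    using assms Lidstone_step_unique by (intro the_equality) blast+
  finally show ?thesis .
qed

lemma Lidstone_step_solvable: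
  assumes "Lidstone l = poly p" shows "\<exists>q f'. Lidstone_step l (poly q) f'"
proof -
  obtain q where q: "pderiv q = p" using poly_antiderivative_exists by blast
  obtain r where r: "pderiv r = q" using poly_antiderivative_exists by blast
  define s where "s = r - [:poly r 0, poly r 1 - poly r 0:]"
  have "pderiv (pderiv s) = p" unfolding s_def by (simp add: pderiv_diff r q pderiv_pCons)
  then have "Lidstone_step l (poly s) (poly (pderiv s))"
    using assms unfolding Lidstone_step_def by (auto simp: s_def)
  then show ?thesis by blast
qed

lemma Lidstone_is_poly: "\<exists>p. Lidstone l = poly p"
proof (induction l)
  case 0
  have "Lidstone 0 = poly [:0, 1:]" by (simp add: fun_eq_iff)
  then show ?case by blast
next
  case (Suc l)
  then show ?case using Lidstone_step_solvable Lidstone_Suc_eqI by metis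
qed

lemma Lidstone_Suc_step: "\<exists>f'. Lidstone_step l (Lidstone (Suc l)) f'"
  using Lidstone_is_poly Lidstone_step_solvable Lidstone_Suc_eqI by metis

lemma continuous_on_Lidstone [continuous_intros]:
  "continuous_on S g \<Longrightarrow> continuous_on S (\<lambda>t. Lidstone l (g t))"
  using Lidstone_is_poly[of l] by (auto intro: continuous_intros)

text \<open>Truncated Taylor lower bounds for cosine and sine on \<open>[0,\<infinity>)\<close>, obtained by
  integrating \<open>sin x \<le> x\<close> twice.\<close>
lemma cos_ge_taylor2: "(x::real) \<ge> 0 \<Longrightarrow> 1 - x^2/2 \<le> cos x"
proof -
  assume x: "x \<ge> 0"
  have "\<exists>d. ((\<lambda>x. cos x - 1 + x^2/2) has_real_derivative d) (at y) \<and> d \<ge> 0"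
    if "0 \<le> y" for y :: real
  proof (intro exI conjI)
    show "((\<lambda>x. cos x - 1 + x^2/2) has_real_derivative (- sin y + y)) (at y)"
      by (auto intro!: derivative_eq_intros)
    show "- sin y + y \<ge> 0" using sin_x_le_x[OF that] by linarith
  qed
  then have "(\<lambda>x. cos x - 1 + x^2/2) 0 \<le> (\<lambda>x. cos x - 1 + x^2/2) x"
    by (intro DERIV_nonneg_imp_nondecreasing[OF x]) auto
  then show ?thesis by simp
qed

lemma sin_ge_taylor3: "(x::real) \<ge> 0 \<Longrightarrow> x - x^3/6 \<le> sin x"
proof -
  assume x: "x \<ge> 0"
  have "\<exists>d. ((\<lambda>x. sin x - x + x^3/6) has_real_derivative d) (at y) \<and> d \<ge> 0"
    if "0 \<le> y" for y :: real
  proof (intro exI conjI)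
    show "((\<lambda>x. sin x - x + x^3/6) has_real_derivative (cos y - 1 + y^2/2)) (at y)"
      by (auto intro!: derivative_eq_intros)
    show "cos y - 1 + y^2/2 \<ge> 0" using cos_ge_taylor2[OF that] by linarith
  qed
  then have "(\<lambda>x. sin x - x + x^3/6) 0 \<le> (\<lambda>x. sin x - x + x^3/6) x"
    by (intro DERIV_nonneg_imp_nondecreasing[OF x]) auto
  then show ?thesis by simp
qed

text \<open>Near 0 use the Taylor bound at \<open>\<pi>t\<close>, near 1 the one at \<open>\<pi>(1-t)\<close>; both need \<open>\<pi>\<^sup>2 < 10.24\<close>.\<close>
lemma sin_pi_ge_cubic:
  fixes t :: real assumes t: "0 \<le> t" "t \<le> 1"
  shows "pi * (t - t^3) / 2 \<le> sin (pi * t)"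
proof -
  have pi_sq: "pi^2 < 10.24"
  proof -
    have "pi^2 < 3.2^2" using pi_approx by (intro power_strict_mono) auto
    then show ?thesis by (simp add: power_divide)
  qed
  show ?thesis
  proof (cases "t \<le> 1/2")
    case True
    have "pi^2 * t^2 \<le> 10.24 * (1/4)"
    proof (rule mult_mono)
      show "t^2 \<le> 1/4" using True t power_mono[of t "1/2" 2] by (simp add: power2_eq_square)
    qed (use pi_sq in auto)
    then have c: "0 \<le> 3 - pi^2 * t^2 + 3 * t^2" using t by simp
    have "(pi * t) - (pi * t)^3/6 - pi * (t - t^3) / 2 = (pi * t/6) * (3 - pi^2 * t^2 + 3 * t^2)"
      by (simp add: field_simps power2_eq_square power3_eq_cube)
    also have "\<dots> \<ge> 0" using c t by simp
    finally show ?thesis using sin_ge_taylor3[of "pi * t"] t by simp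
  next
    case False
    define s where "s = 1 - t"
    have s: "0 \<le> s" "s \<le> 1/2" using False t by (auto simp: s_def)
    have "pi^2 * s \<le> 10.24 * (1/2)"
      using pi_sq s by (intro mult_mono) auto
    then have c: "0 \<le> 9 - s * (pi^2 + 3)" using s by (simp add: algebra_simps)
    have "sin (pi * t) = sin (pi * s)"
      by (simp add: s_def right_diff_distrib sin_diff)
    have "(pi * s) - (pi * s)^3/6 - pi * (t - t^3) / 2 = (pi * s^2/6) * (9 - s * (pi^2 + 3))"
      by (simp add: s_def field_simps power2_eq_square power3_eq_cube)
    also have "\<dots> \<ge> 0" using c s by simp
    finally show ?thesis using sin_ge_taylor3[of "pi * s"] s \<open>sin (pi * t) = sin (pi * s)\<close>
      by simp
  qed
qed

lemma convex_vanishing_ends_nonpos: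
  fixes w w' w'' :: "real \<Rightarrow> real"
  assumes d: "\<And>t. (w has_real_derivative w' t) (at t)" "\<And>t. (w' has_real_derivative w'' t) (at t)"
    and convex: "\<And>t. 0 \<le> t \<Longrightarrow> t \<le> 1 \<Longrightarrow> w'' t \<ge> 0"
    and ends: "w 0 = 0" "w 1 = 0" and t: "0 \<le> t" "t \<le> 1"
  shows "w t \<le> 0"
proof (rule ccontr)
  assume "\<not> w t \<le> 0"
  hence pos: "w t > 0" by simp
  hence t0: "0 < t" "t < 1" using ends t by (auto simp: order.order_iff_strict)
  obtain z1 where z1: "0 < z1" "z1 < t" "w t - w 0 = (t - 0) * w' z1"
    using MVT2[OF t0(1), of w w'] d by blast
  obtain z2 where z2: "t < z2" "z2 < 1" "w 1 - w t = (1 - t) * w' z2"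
    using MVT2[OF t0(2), of w w'] d by blast
  have "w' z1 > 0" using z1 ends pos t0 by (metis diff_zero zero_less_mult_pos)
  moreover have "w' z2 < 0"
  proof -
    have "(1 - t) * w' z2 < 0" using z2 ends pos by simp
    then show ?thesis using t0 by (simp add: mult_less_0_iff)
  qed
  moreover have "w' z1 \<le> w' z2"
  proof -
    obtain z3 where z3: "z1 < z3" "z3 < z2" "w' z2 - w' z1 = (z2 - z1) * w'' z3"
      using MVT2[of z1 z2 w' w''] d z1 z2 by auto
    have "w'' z3 \<ge> 0" using convex z3 z1 z2 by auto
    then have "0 \<le> (z2 - z1) * w'' z3" using z3 by simp
    then show ?thesis using z3(3) by simp
  qed
  ultimately show False by simp
qed

lemma Lidstone_1: "Lidstone 1 = (\<lambda>t. (t^3 - t) / 6)"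
proof -
  have "Lidstone_step 0 (\<lambda>t. (t^3 - t) / 6) (\<lambda>t. (3 * t^2 - 1) / 6)"
    unfolding Lidstone_step_def
    by (auto intro!: derivative_eq_intros simp: field_simps power2_eq_square)
  then show ?thesis using Lidstone_Suc_eqI[of 0] by simp
qed

text \<open>The sharp-order bound \<open>|\<Lambda>\<^sub>l\<^sub>+\<^sub>1(t)| \<le> sin(\<pi>t) / (3\<pi>\<^sup>2\<^sup>l\<^sup>+\<^sup>1)\<close> on \<open>[0,1]\<close>, by induction:
  \<open>\<plusminus>\<Lambda>\<^sub>l\<^sub>+\<^sub>2 - c sin(\<pi>t)/\<pi>\<^sup>2\<close> is convex by the hypothesis and vanishes at 0 and 1.\<close>
lemma Lidstone_sin_bound:
  fixes t :: real assumes t: "0 \<le> t" "t \<le> 1"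
  shows "\<bar>Lidstone (Suc l) t\<bar> \<le> sin (pi * t) / (3 * pi ^ (2*l+1))"
  using t
proof (induction l arbitrary: t)
  case 0
  have "t^3 \<le> t" using 0 power_le_one[of t 2] mult_left_mono[of "t^2" 1 t]
    by (simp add: power3_eq_cube power2_eq_square)
  then have "\<bar>Lidstone (Suc 0) t\<bar> = (t - t^3) / 6" using Lidstone_1 by simp
  also have "\<dots> \<le> sin (pi * t) / (3 * pi)" using sin_pi_ge_cubic[OF 0] by (simp add: field_simps)
  finally show ?case by simp
next
  case (Suc l)
  define c where "c = 1 / (3 * pi ^ (2*l+1))"
  have IH: "\<And>t. 0 \<le> t \<Longrightarrow> t \<le> 1 \<Longrightarrow> \<bar>Lidstone (Suc l) t\<bar> \<le> c * sin (pi * t)"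
    using Suc.IH unfolding c_def by (simp add: field_simps)
  let ?F = "Lidstone (Suc (Suc l))"
  obtain f' where d1: "\<And>t. (?F has_real_derivative f' t) (at t)"
    and d2: "\<And>t. (f' has_real_derivative Lidstone (Suc l) t) (at t)"
    and ends: "?F 0 = 0" "?F 1 = 0"
    using Lidstone_Suc_step[of "Suc l"] unfolding Lidstone_step_def by blast
  have signed: "\<sigma> * ?F t - c / pi^2 * sin (pi * t) \<le> 0" if \<sigma>: "\<bar>\<sigma>\<bar> = 1" for \<sigma> :: real
  proof (rule convex_vanishing_ends_nonpos
      [where w = "\<lambda>t. \<sigma> * ?F t - c / pi^2 * sin (pi * t)"
         and w' = "\<lambda>t. \<sigma> * f' t - c / pi * cos (pi * t)"
         and w'' = "\<lambda>t. \<sigma> * Lidstone (Suc l) t + c * sin (pi * t)"])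
    fix s
    show "((\<lambda>t. \<sigma> * ?F t - c / pi^2 * sin (pi * t)) has_real_derivative
        \<sigma> * f' s - c / pi * cos (pi * s)) (at s)"
      by (rule derivative_eq_intros d1 refl | simp add: power2_eq_square)+
    show "((\<lambda>t. \<sigma> * f' t - c / pi * cos (pi * t)) has_real_derivative
        \<sigma> * Lidstone (Suc l) s + c * sin (pi * s)) (at s)"
      by (rule derivative_eq_intros d2 refl | simp)+
  next
    fix s :: real assume "0 \<le> s" "s \<le> 1"
    moreover have "\<bar>\<sigma> * Lidstone (Suc l) s\<bar> = \<bar>Lidstone (Suc l) s\<bar>" using \<sigma> by (simp add: abs_mult)
    ultimately show "0 \<le> \<sigma> * Lidstone (Suc l) s + c * sin (pi * s)" using IH[of s] by linarith
  qed (use ends Suc.prems in auto)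
  have "c / pi^2 = 1 / (3 * pi ^ (2 * Suc l + 1))"
    unfolding c_def by (simp add: field_simps power2_eq_square)
  then show ?case using signed[of 1] signed[of "-1"] by (simp add: abs_le_iff)
qed

text \<open>The form in which the estimate enters \<open>M\<^sub>0\<^sub>,\<^sub>2\<^sub>p\<close>: symmetric pairs of Lidstone values.\<close>
lemma Lidstone_pair_bound:
  fixes u :: real assumes u: "0 \<le> u" "u \<le> 1"
  shows "\<bar>Lidstone l u\<bar> + \<bar>Lidstone l (1 - u)\<bar> \<le> 2 * pi / 3 / pi ^ (2*l)"
proof (cases l)
  case 0
  then show ?thesis using u pi_gt3 by simp
next
  case (Suc k)
  have s: "sin (pi * u) \<le> 1" "sin (pi * (1 - u)) = sin (pi * u)"
    by (auto simp: right_diff_distrib sin_diff)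
  have "\<bar>Lidstone l u\<bar> + \<bar>Lidstone l (1 - u)\<bar> \<le> 2 * (sin (pi * u) / (3 * pi ^ (2*k+1)))"
    using Lidstone_sin_bound[of u k] Lidstone_sin_bound[of "1 - u" k] u Suc s by simp
  also have "\<dots> \<le> 2 * (1 / (3 * pi ^ (2*k+1)))"
    using s by (intro mult_left_mono divide_right_mono) auto
  also have "\<dots> = 2 * pi / 3 / pi ^ (2*l)" using Suc by (simp add: field_simps)
  finally show ?thesis .
qed

definition strictly_increasing_nodes :: "(nat \<Rightarrow> real) \<Rightarrow> nat \<Rightarrow> bool" where
  "strictly_increasing_nodes x N \<longleftrightarrow> (\<forall>n<N. x n < x (Suc n))"

lemma partition_subinterval:
  assumes inc: "strictly_increasing_nodes x N" and n: "n \<in> {1..N}"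
  shows "x (n - 1) < x n" "x 0 \<le> x (n - 1)" "x n \<le> x N"
proof -
  have step: "x k < x (Suc k)" if "k < N" for k
    using inc that unfolding strictly_increasing_nodes_def by blast
  have mono: "x i \<le> x j" if "i \<le> j" "j \<le> N" for i j
  proof (rule lift_Suc_mono_le_ivl[of "{..<N}"])
    show "x k \<le> x (Suc k)" if "k \<in> {..<N}" for k using step[of k] that by simp
  qed (use that in auto)
  show "x (n - 1) < x n" using step[of "n - 1"] n by auto
  show "x 0 \<le> x (n - 1)" "x n \<le> x N" using mono n by auto
qed

lemma partition_nondegenerate:
  assumes "N \<ge> 1" "strictly_increasing_nodes x N"
  shows "x 0 < x N"
  using partition_subinterval[OF assms(2), of N] assms(1) by auto

lemma a_coef_bounds:
  assumes inc: "strictly_increasing_nodes x N" and n: "n \<in> {1..N}"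
  shows "0 < a_coef x N n" "a_coef x N n \<le> 1"
  using partition_subinterval[OF inc n] unfolding a_coef_def by auto

lemma alpha_norm_bounds:
  assumes N: "N \<ge> 1" and inc: "strictly_increasing_nodes x N" and \<alpha>: "\<alpha> \<in> Theta x N p"
  shows "\<And>n. n \<in> {1..N} \<Longrightarrow> \<bar>\<alpha> n\<bar> \<le> alpha_norm N \<alpha>" "0 \<le> alpha_norm N \<alpha>"
    "alpha_norm N \<alpha> < 1"
proof -
  show ge: "\<bar>\<alpha> n\<bar> \<le> alpha_norm N \<alpha>" if "n \<in> {1..N}" for n
    unfolding alpha_norm_def using that by (intro Max_ge) auto
  show "0 \<le> alpha_norm N \<alpha>" using ge[of 1] N by auto
  have "alpha_norm N \<alpha> \<in> (\<lambda>n. \<bar>\<alpha> n\<bar>) ` {1..N}"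
    unfolding alpha_norm_def using N by (intro Max_in) auto
  then obtain n where n: "n \<in> {1..N}" "alpha_norm N \<alpha> = \<bar>\<alpha> n\<bar>" by auto
  have "\<bar>\<alpha> n\<bar> < a_coef x N n ^ (2*p)" using \<alpha> n unfolding Theta_def by auto
  also have "\<dots> \<le> 1" using a_coef_bounds[OF inc n(1)] by (intro power_le_one) auto
  finally show "alpha_norm N \<alpha> < 1" using n by simp
qed

lemma L_map_affine:
  fixes x :: "nat \<Rightarrow> real"
  assumes "x N \<noteq> x 0"
  shows "L_map x N n s = x (n - 1) + a_coef x N n * (s - x 0)"
proof -
  have "x (n - 1) - a_coef x N n * x 0 = (x N * x (n - 1) - x 0 * x n) / (x N - x 0)"
    using assms unfolding a_coef_def by (simp add: field_simps)
  then show ?thesis unfolding L_map_def by (simp add: algebra_simps)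
qed

lemma Lidstone_interp_locate:
  assumes N: "N \<ge> 1" and inc: "strictly_increasing_nodes x N" and t: "t \<in> {x 0..x N}"
  obtains m s where "m \<in> {1..N}" "s \<in> {x 0..x N}" "t = L_map x N m s"
    "x (m - 1) \<le> t" "t \<le> x m" "Lidstone_interp x y p t = Lidstone_piece x y p m t"
proof -
  define m where "m = (LEAST n. 1 \<le> n \<and> t \<le> x n)"
  have PN: "1 \<le> N \<and> t \<le> x N" using N t by auto
  then have P: "1 \<le> m \<and> t \<le> x m" unfolding m_def by (rule LeastI)
  from PN have "m \<le> N" unfolding m_def by (rule Least_le)
  with P have m: "m \<in> {1..N}" by auto
  have lo: "x (m - 1) \<le> t"
  proof (cases "m = 1")
    case True then show ?thesis using t by simp
  next
    case False
    then have "\<not> (1 \<le> m - 1 \<and> t \<le> x (m - 1))"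
      using not_less_Least[of "m - 1" "\<lambda>n. 1 \<le> n \<and> t \<le> x n"] P unfolding m_def by auto
    then show ?thesis using False P by auto
  qed
  define D h where "D = x N - x 0" and "h = x m - x (m - 1)"
  have h: "0 < h" "h \<le> D"
    using partition_subinterval[OF inc m] unfolding h_def D_def by auto
  define s where "s = x 0 + (t - x (m - 1)) * D / h"
  have "L_map x N m s = t"
    using h unfolding L_map_affine[OF partition_nondegenerate[OF N inc, THEN less_imp_neq, symmetric]]
    unfolding a_coef_def h_def[symmetric] D_def[symmetric] s_def by simp
  moreover have "s \<in> {x 0..x N}"
  proof -
    have "(t - x (m - 1)) * D \<le> h * D" using P h unfolding h_def by (intro mult_right_mono) auto
    then have "(t - x (m - 1)) * D / h \<le> D" using h by (simp add: divide_le_eq mult.commute)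
    moreover have "0 \<le> (t - x (m - 1)) * D / h" using lo h by simp
    ultimately show ?thesis unfolding s_def D_def by auto
  qed
  ultimately show ?thesis
    using that m lo P unfolding Lidstone_interp_def m_def[symmetric] by metis
qed

text \<open>The Lidstone interpolant of the endpoint data \<open>y\<^sub>0\<^sub>,\<^sub>2\<^sub>l\<close>, \<open>y\<^sub>N\<^sub>,\<^sub>2\<^sub>l\<close> on the whole
  interval \<open>[x\<^sub>0, x\<^sub>N]\<close>: this is the part of \<open>q\<^sub>n\<close> multiplied by \<open>\<alpha>\<^sub>n\<close>.\<close>
definition Lidstone_boundary :: "(nat \<Rightarrow> real) \<Rightarrow> (nat \<Rightarrow> nat \<Rightarrow> real) \<Rightarrow> nat \<Rightarrow> nat \<Rightarrow> real \<Rightarrow> real"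
  where "Lidstone_boundary x y N p s = (\<Sum>l=0..p.
     (y 0 (2*l) * Lidstone l ((x N - s) / (x N - x 0))
      + y N (2*l) * Lidstone l ((s - x 0) / (x N - x 0))) * (x N - x 0) ^ (2*l))"

lemma Lidstone_piece_L_map:
  fixes x :: "nat \<Rightarrow> real"
  assumes D: "x N - x 0 \<noteq> 0" and h: "x n - x (n - 1) \<noteq> 0"
  shows "Lidstone_piece x y p n (L_map x N n s) =
    q_fun x y N p \<alpha> n s + \<alpha> n * Lidstone_boundary x y N p s"
proof -
  let ?D = "x N - x 0" and ?h = "x n - x (n - 1)" and ?a = "a_coef x N n"
  have L: "L_map x N n s = x (n - 1) + ?h / ?D * (s - x 0)"
    using L_map_affine[of x N n s] D unfolding a_coef_def by simp
  have "x n - L_map x N n s = ?h * ((x N - s) / ?D)"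
    using D unfolding L by (simp add: field_simps)
  then have right: "(x n - L_map x N n s) / ?h = (x N - s) / ?D"
    using h by simp
  have left: "(L_map x N n s - x (n - 1)) / ?h = (s - x 0) / ?D"
    using h unfolding L by simp
  have scale: "?h ^ (2*l) = ?a ^ (2*l) * ?D ^ (2*l)" for l
    using D unfolding a_coef_def by (simp add: power_mult_distrib[symmetric])
  show ?thesis
    unfolding Lidstone_piece_def Lidstone_boundary_def Let_def q_fun_def right left scale
      sum_distrib_left sum.distrib[symmetric]
    by (rule sum.cong) (simp_all add: algebra_simps)
qed

lemma Lidstone_boundary_bound:
  fixes x :: "nat \<Rightarrow> real"
  assumes D: "x 0 < x N" and s: "s \<in> {x 0..x N}"
  shows "\<bar>Lidstone_boundary x y N p s\<bar> \<le> M0 x y N p"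
proof -
  define D \<rho> where "D = x N - x 0" and "\<rho> = rho y N p"
  define u where "u = (s - x 0) / D"
  have u: "0 \<le> u" "u \<le> 1" using s D unfolding u_def D_def by auto
  have v: "(x N - s) / D = 1 - u" using D unfolding u_def D_def by (simp add: field_simps)
  have term_bound: "\<bar>(y 0 (2*l) * Lidstone l (1 - u) + y N (2*l) * Lidstone l u) * D ^ (2*l)\<bar>
      \<le> \<rho> * (2 * pi / 3 / pi ^ (2*l)) * D ^ (2*l)" if l: "l \<in> {0..p}" for l
  proof -
    have \<rho>: "\<bar>y 0 (2*l)\<bar> \<le> \<rho>" "\<bar>y N (2*l)\<bar> \<le> \<rho>"
      unfolding \<rho>_def rho_def using l by (intro order_trans[OF _ Max_ge]; force)+
    have "\<bar>y 0 (2*l) * Lidstone l (1 - u) + y N (2*l) * Lidstone l u\<bar>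
        \<le> \<rho> * \<bar>Lidstone l (1 - u)\<bar> + \<rho> * \<bar>Lidstone l u\<bar>"
      using \<rho> by (intro order_trans[OF abs_triangle_ineq] add_mono)
        (auto simp: abs_mult intro: mult_right_mono)
    also have "\<dots> \<le> \<rho> * (2 * pi / 3 / pi ^ (2*l))"
      using Lidstone_pair_bound[OF u, of l] \<rho> unfolding distrib_left[symmetric]
      by (intro mult_left_mono) auto
    finally have pair: "\<bar>y 0 (2*l) * Lidstone l (1 - u) + y N (2*l) * Lidstone l u\<bar>
        \<le> \<rho> * (2 * pi / 3 / pi ^ (2*l))" .
    have "\<bar>D ^ (2*l)\<bar> = D ^ (2*l)" "0 \<le> D ^ (2*l)" using D unfolding D_def by simp_all
    then show ?thesis unfolding abs_mult using mult_right_mono[OF pair] by simp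
  qed
  have "\<bar>Lidstone_boundary x y N p s\<bar>
      \<le> (\<Sum>l=0..p. \<bar>(y 0 (2*l) * Lidstone l (1 - u) + y N (2*l) * Lidstone l u) * D ^ (2*l)\<bar>)"
    unfolding Lidstone_boundary_def D_def[symmetric] unfolding v u_def[symmetric] by (rule sum_abs)
  also have "\<dots> \<le> (\<Sum>l=0..p. \<rho> * (2 * pi / 3 / pi ^ (2*l)) * D ^ (2*l))"
    using term_bound by (rule sum_mono)
  also have "\<dots> = M0 x y N p"
    unfolding M0_def \<rho>_def[symmetric] D_def[symmetric] sum_distrib_left
    by (rule sum.cong) (simp_all add: power_divide)
  finally show ?thesis .
qed

text \<open>The self-similarity of the error \<open>\<ell>\<^sub>\<alpha> - \<phi>\<close>: at \<open>t = L\<^sub>n(s)\<close> the functional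
  equation and \<open>\<phi> \<circ> L\<^sub>n = q\<^sub>n + \<alpha>\<^sub>n B\<close> give \<open>\<ell>\<^sub>\<alpha>(t) - \<phi>(t) = \<alpha>\<^sub>n (\<ell>\<^sub>\<alpha>(s) - B(s))\<close>.\<close>
lemma FIF_error_self_similar:
  assumes N: "N \<ge> 1" and inc: "strictly_increasing_nodes x N"
    and f: "is_Lidstone_FIF x y N p \<alpha> f" and t: "t \<in> {x 0..x N}"
  obtains n s where "n \<in> {1..N}" "s \<in> {x 0..x N}"
    "f t - Lidstone_interp x y p t = \<alpha> n * (f s - Lidstone_boundary x y N p s)"
proof -
  obtain n s where n: "n \<in> {1..N}" and s: "s \<in> {x 0..x N}" and ts: "t = L_map x N n s"
    and piece: "Lidstone_interp x y p t = Lidstone_piece x y p n t"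
    using Lidstone_interp_locate[OF N inc t] by metis
  have "f t = \<alpha> n * f s + q_fun x y N p \<alpha> n s"
    using f n s unfolding is_Lidstone_FIF_def ts by auto
  moreover have "Lidstone_interp x y p t = q_fun x y N p \<alpha> n s + \<alpha> n * Lidstone_boundary x y N p s"
    unfolding piece unfolding ts using partition_nondegenerate[OF N inc] partition_subinterval(1)[OF inc n]
    by (intro Lidstone_piece_L_map) auto
  ultimately show ?thesis using that n s by (simp add: algebra_simps)
qed

lemma C_k_on_continuous:
  assumes "C_k_on m a b f" shows "continuous_on {a..b} f"
proof -
  obtain D where D0: "\<forall>t\<in>{a..b}. D 0 t = f t"
    and D: "\<forall>k<m. \<forall>t\<in>{a..b}. (D k has_real_derivative D (Suc k) t) (at t within {a..b})"
    and Dm: "continuous_on {a..b} (D m)"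
    using assms unfolding C_k_on_def by blast
  have "continuous_on {a..b} (D 0)"
  proof (cases "m = 0")
    case True then show ?thesis using Dm by simp
  next
    case False then show ?thesis using D by (intro DERIV_continuous_on[of _ _ "D 1"]) auto
  qed
  then show ?thesis using D0 continuous_on_eq by metis
qed

lemma continuous_on_abs_bdd_above:
  fixes f :: "real \<Rightarrow> real"
  assumes "continuous_on {a..b} f" shows "bdd_above ((\<lambda>t. \<bar>f t\<bar>) ` {a..b})"
proof -
  have "bounded (f ` {a..b})" using assms by (intro compact_imp_bounded compact_continuous_image) auto
  then show ?thesis unfolding bounded_real by (auto intro: bdd_aboveI2)
qed

lemma abs_diff_bdd_above:
  fixes f g :: "'a \<Rightarrow> real"
  assumes "bdd_above ((\<lambda>t. \<bar>f t\<bar>) ` S)" "bdd_above ((\<lambda>t. \<bar>g t\<bar>) ` S)"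
  shows "bdd_above ((\<lambda>t. \<bar>f t - g t\<bar>) ` S)"
proof -
  obtain Kf Kg where "\<And>t. t \<in> S \<Longrightarrow> \<bar>f t\<bar> \<le> Kf" "\<And>t. t \<in> S \<Longrightarrow> \<bar>g t\<bar> \<le> Kg"
    using assms unfolding bdd_above_def by fastforce
  then show ?thesis by (intro bdd_aboveI2[of _ _ "Kf + Kg"])
    (meson abs_triangle_ineq4 add_mono order_trans)
qed

text \<open>The classical interpolant is bounded on \<open>[x\<^sub>0, x\<^sub>N]\<close>: it coincides on each of the
  finitely many subintervals with a continuous piece.\<close>
lemma Lidstone_interp_abs_bdd_above:
  assumes N: "N \<ge> 1" and inc: "strictly_increasing_nodes x N"
  shows "bdd_above ((\<lambda>t. \<bar>Lidstone_interp x y p t\<bar>) ` {x 0..x N})"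
proof -
  have "continuous_on S (Lidstone_piece x y p n)" if "n \<in> {1..N}" for S n
    using partition_subinterval(1)[OF inc that]
    unfolding Lidstone_piece_def Let_def by (intro continuous_intros) auto
  then have "bounded (\<Union>n\<in>{1..N}. Lidstone_piece x y p n ` {x (n - 1)..x n})"
    by (intro bounded_UN ballI compact_imp_bounded compact_continuous_image) auto
  then obtain K where K: "\<And>v. v \<in> (\<Union>n\<in>{1..N}. Lidstone_piece x y p n ` {x (n - 1)..x n}) \<Longrightarrow> \<bar>v\<bar> \<le> K"
    unfolding bounded_real by auto
  have "\<bar>Lidstone_interp x y p t\<bar> \<le> K" if t: "t \<in> {x 0..x N}" for t
  proof -
    obtain m s where "m \<in> {1..N}" "x (m - 1) \<le> t" "t \<le> x m"
        "Lidstone_interp x y p t = Lidstone_piece x y p m t"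
      using Lidstone_interp_locate[OF N inc t] by metis
    then show ?thesis by (intro K) (auto intro!: bexI[of _ m])
  qed
  then show ?thesis by (intro bdd_aboveI2)
qed

lemma sup_norm_upper:
  assumes "bdd_above ((\<lambda>t. \<bar>f t\<bar>) ` {a..b})" "t \<in> {a..b}"
  shows "\<bar>f t\<bar> \<le> sup_norm a b f"
  unfolding sup_norm_def using assms by (intro cSUP_upper) auto

lemma sup_norm_self_bound:
  assumes ab: "a \<le> b" and A: "A < 1"
    and pointwise: "\<And>t. t \<in> {a..b} \<Longrightarrow> \<bar>g t\<bar> \<le> A * (sup_norm a b g + K)"
  shows "sup_norm a b g \<le> A / (1 - A) * K"
proof -
  have "sup_norm a b g \<le> A * (sup_norm a b g + K)"
    unfolding sup_norm_def using ab pointwise[unfolded sup_norm_def] by (intro cSUP_least) auto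
  then have "sup_norm a b g * (1 - A) \<le> A * K" by (simp add: algebra_simps)
  then show ?thesis using A by (simp add: le_divide_eq)
qed

lemma FIF_error_abs_bdd_above:
  assumes N: "N \<ge> 1" and inc: "strictly_increasing_nodes x N"
    and FIF: "is_Lidstone_FIF x y N p \<alpha> f"
  shows "bdd_above ((\<lambda>t. \<bar>f t - Lidstone_interp x y p t\<bar>) ` {x 0..x N})"
proof (rule abs_diff_bdd_above)
  show "bdd_above ((\<lambda>t. \<bar>f t\<bar>) ` {x 0..x N})"
    using FIF unfolding is_Lidstone_FIF_def
    by (intro continuous_on_abs_bdd_above C_k_on_continuous) blast
  show "bdd_above ((\<lambda>t. \<bar>Lidstone_interp x y p t\<bar>) ` {x 0..x N})"
    by (rule Lidstone_interp_abs_bdd_above[OF N inc])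
qed

lemma FIF_error_pointwise:
  assumes N: "N \<ge> 1" and inc: "strictly_increasing_nodes x N" and \<alpha>: "\<alpha> \<in> Theta x N p"
    and FIF: "is_Lidstone_FIF x y N p \<alpha> f" and t: "t \<in> {x 0..x N}"
  shows "\<bar>f t - Lidstone_interp x y p t\<bar> \<le> alpha_norm N \<alpha> *
    (sup_norm (x 0) (x N) (\<lambda>t. f t - Lidstone_interp x y p t)
     + (sup_norm (x 0) (x N) (Lidstone_interp x y p) + M0 x y N p))"
proof -
  define \<phi> g where "\<phi> = Lidstone_interp x y p" and "g = (\<lambda>t. f t - \<phi> t)"
  obtain n s where n: "n \<in> {1..N}" and s: "s \<in> {x 0..x N}"
    and error: "g t = \<alpha> n * (f s - Lidstone_boundary x y N p s)"
    using FIF_error_self_similar[OF N inc FIF t] unfolding g_def \<phi>_def by metis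
  have "\<bar>f s - Lidstone_boundary x y N p s\<bar> \<le> \<bar>g s\<bar> + \<bar>\<phi> s\<bar> + \<bar>Lidstone_boundary x y N p s\<bar>"
    unfolding g_def by linarith
  also have "\<dots> \<le> sup_norm (x 0) (x N) g + (sup_norm (x 0) (x N) \<phi> + M0 x y N p)"
    using sup_norm_upper[OF FIF_error_abs_bdd_above[OF N inc FIF] s]
      sup_norm_upper[OF Lidstone_interp_abs_bdd_above[OF N inc, of y p] s]
      Lidstone_boundary_bound[OF partition_nondegenerate[OF N inc] s, of y p]
    unfolding g_def \<phi>_def by linarith
  finally have "\<bar>g t\<bar> \<le> alpha_norm N \<alpha> *
      (sup_norm (x 0) (x N) g + (sup_norm (x 0) (x N) \<phi> + M0 x y N p))"
    unfolding error abs_mult using alpha_norm_bounds[OF N inc \<alpha>] n by (intro mult_mono) auto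
  then show ?thesis unfolding g_def \<phi>_def .
qed

theorem corollary4p1:
  fixes p N :: nat and x :: "nat \<Rightarrow> real" and y :: "nat \<Rightarrow> nat \<Rightarrow> real"
    and \<alpha> :: "nat \<Rightarrow> real" and f :: "real \<Rightarrow> real"
  assumes "N \<ge> 1"
    and "\<And>n. n < N \<Longrightarrow> x n < x (Suc n)"
    and "\<alpha> \<in> Theta x N p"
    and "is_Lidstone_FIF x y N p \<alpha> f"
  shows "sup_norm (x 0) (x N) (\<lambda>t. f t - Lidstone_interp x y p t)
    \<le> alpha_norm N \<alpha> / (1 - alpha_norm N \<alpha>) *
       (sup_norm (x 0) (x N) (Lidstone_interp x y p) + M0 x y N p)"
proof (rule sup_norm_self_bound)
  have inc: "strictly_increasing_nodes x N"
    using assms(2) unfolding strictly_increasing_nodes_def by blast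
  show "x 0 \<le> x N" using partition_nondegenerate[OF assms(1) inc] by simp
  show "alpha_norm N \<alpha> < 1" by (rule alpha_norm_bounds(3)[OF assms(1) inc assms(3)])
  show "\<bar>f t - Lidstone_interp x y p t\<bar> \<le> alpha_norm N \<alpha> *
      (sup_norm (x 0) (x N) (\<lambda>t. f t - Lidstone_interp x y p t)
       + (sup_norm (x 0) (x N) (Lidstone_interp x y p) + M0 x y N p))"
    if "t \<in> {x 0..x N}" for t
    by (rule FIF_error_pointwise[OF assms(1) inc assms(3,4) that])
qed

end
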